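(* Let $\mathcal T$ be a finite tree with $|\mathcal T|$ vertices. Then for all $n\ge1$, \[ h_n(W(\mathcal T))\le n^{2|\mathcal T|}\cdot 4^{|\mathcal T| n}\cdot n^{\gamma(\mathcal T) n}. \]
   Context: $W(\mathcal T)$ is the right-angled Coxeter group of $\mathcal T$: generators $\sigma_v$ for the vertices, relations $\sigma_v^2=1$, and $\sigma_v\sigma_w=\sigma_w\sigma_v$ for adjacent $v,w$. $h_n(\Gamma)=|\mathrm{Hom}(\Gamma,\mathrm{Sym}_n)|$. A clique collection is an induced subgraph whose connected components are complete graphs. For components $\mathcal C_1,\dots,\mathcal C_q$ set $w(\mathcal C)=\sum_i(1-2^{-|\mathcal C_i|})$. Then $\gamma(\mathcal T)$ is the maximum of $w$ over all clique collections of $\mathcal T$. *)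

theory Defs
  imports "HOL-Combinatorics.Permutations" "HOL-Library.FuncSet" Complex_Main
begin

definition simple_graph :: "'a set \<Rightarrow> ('a \<Rightarrow> 'a \<Rightarrow> bool) \<Rightarrow> bool" where
  "simple_graph V E \<longleftrightarrow> finite V \<and> (\<forall>x y. E x y \<longrightarrow> x \<in> V \<and> y \<in> V)
     \<and> (\<forall>x y. E x y \<longrightarrow> E y x) \<and> (\<forall>x. \<not> E x x)"

definition connected_graph :: "'a set \<Rightarrow> ('a \<Rightarrow> 'a \<Rightarrow> bool) \<Rightarrow> bool" where
  "connected_graph V E \<longleftrightarrow> (\<forall>u\<in>V. \<forall>v\<in>V. E\<^sup>*\<^sup>* u v)"

definition is_cycle :: "('a \<Rightarrow> 'a \<Rightarrow> bool) \<Rightarrow> 'a list \<Rightarrow> bool" where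
  "is_cycle E cs \<longleftrightarrow> length cs \<ge> 3 \<and> distinct cs
     \<and> (\<forall>i. Suc i < length cs \<longrightarrow> E (cs ! i) (cs ! Suc i))
     \<and> E (last cs) (hd cs)"

definition is_tree :: "'a set \<Rightarrow> ('a \<Rightarrow> 'a \<Rightarrow> bool) \<Rightarrow> bool" where
  "is_tree V E \<longleftrightarrow> simple_graph V E \<and> V \<noteq> {} \<and> connected_graph V E
     \<and> (\<nexists>cs. is_cycle E cs)"

text \<open>h_n(W(T)) = number of homomorphisms from the right-angled Coxeter group W(T) to Sym_n,
  i.e. the number of families (sigma_v)_{v in V} of permutations of {0..<n} satisfying
  the defining relations sigma_v^2 = 1 and sigma_v sigma_w = sigma_w sigma_v for adjacent v, w.\<close>
definition hom_count_RACG :: "'a set \<Rightarrow> ('a \<Rightarrow> 'a \<Rightarrow> bool) \<Rightarrow> nat \<Rightarrow> nat" where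
  "hom_count_RACG V E n = card {\<sigma> \<in> V \<rightarrow>\<^sub>E {p. p permutes {..<n}}.
       (\<forall>v\<in>V. \<sigma> v \<circ> \<sigma> v = id) \<and>
       (\<forall>v\<in>V. \<forall>w\<in>V. E v w \<longrightarrow> \<sigma> v \<circ> \<sigma> w = \<sigma> w \<circ> \<sigma> v)}"

definition induced_conn :: "('a \<Rightarrow> 'a \<Rightarrow> bool) \<Rightarrow> 'a set \<Rightarrow> 'a \<Rightarrow> 'a \<Rightarrow> bool" where
  "induced_conn E S = (\<lambda>a b. E a b \<and> a \<in> S \<and> b \<in> S)\<^sup>*\<^sup>*"

definition components :: "('a \<Rightarrow> 'a \<Rightarrow> bool) \<Rightarrow> 'a set \<Rightarrow> 'a set set" where
  "components E S = (\<lambda>x. {y \<in> S. induced_conn E S x y}) ` S"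

definition clique_collection :: "'a set \<Rightarrow> ('a \<Rightarrow> 'a \<Rightarrow> bool) \<Rightarrow> 'a set \<Rightarrow> bool" where
  "clique_collection V E S \<longleftrightarrow> S \<subseteq> V \<and>
     (\<forall>C\<in>components E S. \<forall>x\<in>C. \<forall>y\<in>C. x \<noteq> y \<longrightarrow> E x y)"

definition cc_weight :: "('a \<Rightarrow> 'a \<Rightarrow> bool) \<Rightarrow> 'a set \<Rightarrow> real" where
  "cc_weight E S = (\<Sum>C\<in>components E S. 1 - 2 powi (- int (card C)))"

definition gamma_graph :: "'a set \<Rightarrow> ('a \<Rightarrow> 'a \<Rightarrow> bool) \<Rightarrow> real" where
  "gamma_graph V E = Max (cc_weight E ` {S. clique_collection V E S})"

end

theory Submission
  imports Defs
begin

text \<open>Root the tree. A homomorphism \<open>W(T) \<rightarrow> Sym\<^sub>n\<close> is a family of involutions \<open>\<sigma>\<^sub>v\<close> in which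
  \<open>\<sigma>\<^sub>v\<close> commutes with the permutation \<open>\<alpha>\<close> of the parent of v (\<open>\<alpha> = id\<close> at the root). Given \<open>\<alpha>\<close>,
  \<open>\<sigma>\<^sub>v\<close> is determined by its values at the least points of the orbits of \<open>\<langle>\<alpha>, \<sigma>\<^sub>v\<rangle>\<close>, so it
  is encoded by a word of length n over n + 3 letters, where a genuine choice among n letters
  occurs only at orbit minima i with \<open>\<sigma>\<^sub>v i \<notin> {i, \<alpha> i}\<close>. Giving these n letters weight 1/n
  and the other three weight 1, all words together weigh \<open>4\<^bsup>|T| n\<^esup>\<close>, so it suffices that
  every homomorphism weighs at least \<open>n\<^bsup>-\<gamma> n\<^esup>\<close>.

  Each such costly orbit minimum accounts for an orbit on which a move weight, counting
  the points moved by \<open>\<sigma>\<^sub>v\<close> and once more those also fixed by \<open>\<alpha>\<close>, adds up to 4.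
  Summing over v, at a point i the total move weight is \<open>|M| + c(M)\<close>, where
  \<open>M = {v. \<sigma>\<^sub>v i \<noteq> i}\<close> induces a forest with c(M) components. Removing a deepest leaf
  together with its siblings (and possibly their parent) shows \<open>|M| + c(M) \<le> 4 w(C)\<close> for a
  clique collection C, hence at most \<open>\<gamma>\<close> costly letters per point.\<close>

section \<open>Rooted trees\<close>

lemma cycle_of_path:
  assumes "distinct P" "length P \<ge> 3" "successively E P" "E (last P) (hd P)"
  shows "is_cycle E P"
  using assms unfolding is_cycle_def successively_conv_nth by auto

locale bfs_tree =
  fixes V :: "'a set" and E :: "'a \<Rightarrow> 'a \<Rightarrow> bool" and root :: 'a
    and par :: "'a \<Rightarrow> 'a" and depth :: "'a \<Rightarrow> nat"
  assumes simple: "simple_graph V E"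
    and root_in_V: "root \<in> V" and depth_root: "depth root = 0"
    and parent: "\<And>v. v \<in> V \<Longrightarrow> v \<noteq> root \<Longrightarrow> par v \<in> V \<and> E v (par v) \<and> depth v = Suc (depth (par v))"
    and depth_edge: "\<And>a b. E a b \<Longrightarrow> depth b \<le> Suc (depth a)"
begin

lemma finite_V: "finite V"
  and edge_in_V: "E x y \<Longrightarrow> x \<in> V \<and> y \<in> V"
  and edge_sym: "E x y \<Longrightarrow> E y x"
  and edge_irrefl: "\<not> E x x"
  using simple unfolding simple_graph_def by auto

lemma depth_eq_0_iff: "v \<in> V \<Longrightarrow> depth v = 0 \<longleftrightarrow> v = root"
  using parent depth_root by fastforce

lemma same_depth_path:
  assumes "x \<in> V" "y \<in> V" "x \<noteq> y" "depth x = k" "depth y = k"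
  shows "\<exists>P. distinct P \<and> hd P = x \<and> last P = y \<and> length P \<ge> 3 \<and> successively E P
           \<and> (\<forall>z\<in>set P. z \<in> V \<and> depth z \<le> k)"
  using assms
proof (induction k arbitrary: x y)
  case 0
  then show ?case using depth_eq_0_iff by blast
next
  case (Suc k)
  have xy_root: "x \<noteq> root" "y \<noteq> root" using Suc.prems depth_root by auto
  note px = parent[OF Suc.prems(1) xy_root(1)] and py = parent[OF Suc.prems(2) xy_root(2)]
  show ?case
  proof (cases "par x = par y")
    case True
    show ?thesis
    proof (intro exI conjI)
      show "distinct [x, par x, y]"
        using px py True Suc.prems(3) by (metis distinct_length_2_or_more distinct_singleton n_not_Suc_n)
      show "successively E [x, par x, y]" using px py True edge_sym by simp
    qed (use px Suc.prems in auto)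
  next
    case False
    obtain P where P: "distinct P" "hd P = par x" "last P = par y" "length P \<ge> 3"
        "successively E P" "\<forall>z\<in>set P. z \<in> V \<and> depth z \<le> k"
      using Suc.IH[of "par x" "par y"] px py Suc.prems False by auto
    have "x \<notin> set P" "y \<notin> set P" "P \<noteq> []" using P Suc.prems by fastforce+
    then show ?thesis
      using P px py Suc.prems edge_sym[of y "par y"]
      by (intro exI[of _ "x # P @ [y]"]) (auto simp: successively_append_iff successively_Cons)
  qed
qed

context
  assumes acyclic: "\<nexists>cs. is_cycle E cs"
begin

lemma depth_edge_neq:
  assumes "E a b"
  shows "depth a \<noteq> depth b"
proof
  assume eq: "depth a = depth b"
  have "a \<in> V" "b \<in> V" "a \<noteq> b" using assms edge_in_V edge_irrefl by auto
  then obtain P where "distinct P" "hd P = a" "last P = b" "length P \<ge> 3" "successively E P"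
    using same_depth_path eq by blast
  then have "is_cycle E P" using assms edge_sym by (intro cycle_of_path) auto
  then show False using acyclic by blast
qed

lemma edge_to_deeper_is_parent:
  assumes ab: "E a b" and d: "depth b = Suc (depth a)"
  shows "b \<noteq> root \<and> par b = a"
proof (rule ccontr)
  assume nb: "\<not> ?thesis"
  have abV: "a \<in> V" "b \<in> V" using ab edge_in_V by auto
  have b_root: "b \<noteq> root" using d depth_root by auto
  note pb = parent[OF abV(2) b_root]
  have "par b \<noteq> a" using nb b_root by auto
  then obtain P where P: "distinct P" "hd P = a" "last P = par b" "length P \<ge> 3"
      "successively E P" "\<forall>z\<in>set P. z \<in> V \<and> depth z \<le> depth a"
    using same_depth_path[of a "par b"] pb abV d by auto
  have "b \<notin> set P" "P \<noteq> []" using P d by fastforce+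
  then have "is_cycle E (P @ [b])"
    using P pb ab edge_sym[of b "par b"] edge_sym[of a b]
    by (intro cycle_of_path) (auto simp: successively_append_iff)
  then show False using acyclic by blast
qed

lemma edge_parent: "E a b \<Longrightarrow> (a \<noteq> root \<and> par a = b) \<or> (b \<noteq> root \<and> par b = a)"
  using depth_edge[of a b] depth_edge[of b a] edge_sym[of a b] depth_edge_neq[of a b]
    edge_to_deeper_is_parent[of a b] edge_to_deeper_is_parent[of b a] by fastforce

end

end

lemma simple_graph_bfs_tree:
  assumes sg: "simple_graph V E" and con: "connected_graph V E" and r: "r \<in> V"
  obtains par depth where "bfs_tree V E r par depth"
proof -
  have EV: "\<And>x y. E x y \<Longrightarrow> x \<in> V \<and> y \<in> V"
    using sg unfolding simple_graph_def by auto
  define depth where "depth v = (LEAST k. (E^^k) r v)" for v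
  define par where "par v = (SOME u. (E^^(depth v - 1)) r u \<and> E u v)" for v
  have reach: "(E^^(depth v)) r v" if "v \<in> V" for v
  proof -
    have "E\<^sup>*\<^sup>* r v" using con r that unfolding connected_graph_def by auto
    then obtain k where "(E^^k) r v" using rtranclp_imp_relpowp by metis
    then show ?thesis unfolding depth_def by (rule LeastI)
  qed
  have depth_le: "depth v \<le> k" if "(E^^k) r v" for v k
    unfolding depth_def using that by (rule Least_le)
  have depth_edge: "depth b \<le> Suc (depth a)" if "E a b" for a b
    using depth_le[OF relpowp_Suc_I[OF reach that]] EV[OF that] by auto
  have parent: "par v \<in> V \<and> E v (par v) \<and> depth v = Suc (depth (par v))"
    if v: "v \<in> V" "v \<noteq> r" for v
  proof -
    have rv: "(E^^(depth v)) r v" using reach v by auto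
    then obtain j where j: "depth v = Suc j" using v by (cases "depth v") auto
    then have "\<exists>u. (E^^(depth v - 1)) r u \<and> E u v" using rv by (auto elim: relpowp_Suc_E)
    then have pu: "(E^^j) r (par v) \<and> E (par v) v" unfolding par_def j
      by (metis (mono_tags, lifting) diff_Suc_1 j someI_ex)
    then have "depth (par v) \<le> j" using depth_le by auto
    moreover have "depth v \<le> Suc (depth (par v))" using depth_edge pu by auto
    ultimately show ?thesis using pu EV sg j unfolding simple_graph_def by auto
  qed
  have "depth r = 0" using depth_le[of 0 r] by simp
  then have "bfs_tree V E r par depth" using sg r parent depth_edge by unfold_locales blast
  then show ?thesis by (rule that)
qed

locale rooted_tree = bfs_tree +
  assumes edge_parent: "\<And>a b. E a b \<Longrightarrow> (a \<noteq> root \<and> par a = b) \<or> (b \<noteq> root \<and> par b = a)"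

lemma is_tree_rooted_tree:
  assumes "is_tree V E"
  obtains r par depth where "rooted_tree V E r par depth"
proof -
  obtain r where "r \<in> V" using assms unfolding is_tree_def by auto
  then obtain par depth where bfs: "bfs_tree V E r par depth"
    using assms simple_graph_bfs_tree unfolding is_tree_def by metis
  have "rooted_tree V E r par depth"
    using bfs_tree.edge_parent[OF bfs] assms unfolding rooted_tree_def rooted_tree_axioms_def is_tree_def
    by (simp add: bfs)
  then show ?thesis by (rule that)
qed

section \<open>Clique collections\<close>

lemma induced_conn_mono: "induced_conn E S x y \<Longrightarrow> S \<subseteq> T \<Longrightarrow> induced_conn E T x y"
  unfolding induced_conn_def
  by (induction rule: rtranclp_induct) (auto intro: rtranclp.rtrancl_into_rtrancl)

lemma induced_conn_Un_stays:
  assumes "induced_conn E (S \<union> T) x y" "x \<in> S" "\<forall>a\<in>S. \<forall>b\<in>T. \<not> E a b"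
  shows "induced_conn E S x y \<and> y \<in> S"
  using assms(1) unfolding induced_conn_def
proof (induction rule: rtranclp_induct)
  case (step y z)
  then have "z \<in> S" using assms(3) by auto
  then show ?case using step by (auto intro: rtranclp.rtrancl_into_rtrancl)
qed (use assms(2) in auto)

lemma components_Un:
  assumes "\<forall>a\<in>S. \<forall>b\<in>T. \<not> E a b \<and> \<not> E b a"
  shows "components E (S \<union> T) = components E S \<union> components E T"
proof -
  have comp: "{y \<in> S \<union> T. induced_conn E (S \<union> T) x y} = {y \<in> S. induced_conn E S x y}"
    if "x \<in> S" "\<forall>a\<in>S. \<forall>b\<in>T. \<not> E a b" for S T x
    using induced_conn_Un_stays[OF _ that] induced_conn_mono[of E S x _ "S \<union> T"] by blast
  have "components E (S \<union> T) = (\<lambda>x. {y \<in> S \<union> T. induced_conn E (S \<union> T) x y}) ` S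
     \<union> (\<lambda>x. {y \<in> T \<union> S. induced_conn E (T \<union> S) x y}) ` T"
    unfolding components_def by (auto simp: Un_commute)
  then show ?thesis
    unfolding components_def using assms comp[of _ S T] comp[of _ T S] by auto
qed

lemma components_subset: "C \<in> components E S \<Longrightarrow> C \<subseteq> S \<and> C \<noteq> {}"
  unfolding components_def induced_conn_def by auto

lemma finite_components: "finite S \<Longrightarrow> finite (components E S)"
  unfolding components_def by auto

lemma components_independent:
  assumes "\<forall>a\<in>S. \<forall>b\<in>S. \<not> E a b"
  shows "components E S = (\<lambda>x. {x}) ` S"
proof -
  have "induced_conn E S x y \<longleftrightarrow> x = y" for x y
  proof
    assume "induced_conn E S x y"
    then show "x = y" unfolding induced_conn_def using assms by (induction rule: rtranclp_induct) auto
  qed (auto simp: induced_conn_def)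
  then show ?thesis unfolding components_def by auto
qed

lemma components_edge:
  assumes "E q u" "E u q"
  shows "components E {q, u} = {{q, u}}"
proof -
  have "induced_conn E {q, u} x y" if "x \<in> {q, u}" "y \<in> {q, u}" for x y
    using that assms unfolding induced_conn_def by auto
  then show ?thesis unfolding components_def by auto
qed

lemma clique_collection_empty: "clique_collection V E {}"
  and cc_weight_empty: "cc_weight E {} = 0"
  unfolding clique_collection_def cc_weight_def components_def by auto

lemma clique_collection_Un:
  assumes "clique_collection V E S" "clique_collection V E T"
    and "\<forall>a\<in>S. \<forall>b\<in>T. \<not> E a b \<and> \<not> E b a"
  shows "clique_collection V E (S \<union> T)"
  using assms unfolding clique_collection_def components_Un[OF assms(3)] by auto

lemma cc_weight_Un:
  assumes "finite S" "finite T" "S \<inter> T = {}" "\<forall>a\<in>S. \<forall>b\<in>T. \<not> E a b \<and> \<not> E b a"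
  shows "cc_weight E (S \<union> T) = cc_weight E S + cc_weight E T"
proof -
  have "components E S \<inter> components E T = {}"
    using components_subset assms(3) by blast
  then show ?thesis unfolding cc_weight_def components_Un[OF assms(4)]
    using finite_components assms(1,2) by (intro sum.union_disjoint) auto
qed

lemma clique_collection_independent:
  "S \<subseteq> V \<Longrightarrow> \<forall>a\<in>S. \<forall>b\<in>S. \<not> E a b \<Longrightarrow> clique_collection V E S"
  unfolding clique_collection_def by (auto simp: components_independent)

lemma cc_weight_independent:
  assumes "finite S" "\<forall>a\<in>S. \<forall>b\<in>S. \<not> E a b"
  shows "cc_weight E S = real (card S) / 2"
  unfolding cc_weight_def components_independent[OF assms(2)]
  by (subst sum.reindex) (auto simp: inj_on_def)

lemma clique_collection_edge:
  "E q u \<Longrightarrow> E u q \<Longrightarrow> q \<in> V \<Longrightarrow> u \<in> V \<Longrightarrow> clique_collection V E {q, u}"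
  unfolding clique_collection_def by (simp add: components_edge)

lemma cc_weight_edge:
  assumes "E q u" "E u q" "q \<noteq> u"
  shows "cc_weight E {q, u} = 3 / 4"
  unfolding cc_weight_def components_edge[of E q u, OF assms(1,2)] using assms(3) by (simp add: power_int_minus)

lemma cc_weight_le_gamma_graph:
  assumes "finite V" "clique_collection V E S"
  shows "cc_weight E S \<le> gamma_graph V E"
proof -
  have "{S. clique_collection V E S} \<subseteq> Pow V" unfolding clique_collection_def by auto
  then have "finite {S. clique_collection V E S}" using assms(1) finite_subset by blast
  then show ?thesis unfolding gamma_graph_def using assms(2) by (intro Max_ge) auto
qed

section \<open>The clique weight of a subforest\<close>

context rooted_tree
begin

text \<open>The roots of M are the top vertices of the components of the forest induced on M, so
  \<open>card (roots M)\<close> is the number of these components.\<close>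
definition roots :: "'a set \<Rightarrow> 'a set" where
  "roots M = {v \<in> M. v = root \<or> par v \<notin> M}"

lemma roots_Diff:
  assumes "\<forall>v\<in>M - X. v \<noteq> root \<longrightarrow> par v \<notin> X"
  shows "roots (M - X) = roots M - X"
  using assms unfolding roots_def by auto

lemma card_roots_le:
  assumes "finite M" "\<forall>v\<in>M - X. v \<noteq> root \<longrightarrow> par v \<notin> X"
  shows "card (roots M) \<le> card (roots (M - X)) + card (roots M \<inter> X)"
proof -
  have "roots M \<subseteq> roots (M - X) \<union> (roots M \<inter> X)"
    using roots_Diff[OF assms(2)] by auto
  moreover have "finite (roots (M - X) \<union> (roots M \<inter> X))"
    using assms(1) unfolding roots_def by auto
  ultimately have "card (roots M) \<le> card (roots (M - X) \<union> (roots M \<inter> X))"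
    by (intro card_mono)
  also have "\<dots> \<le> card (roots (M - X)) + card (roots M \<inter> X)" by (rule card_Un_le)
  finally show ?thesis .
qed

lemma deepest_neighbour_is_parent:
  assumes "u \<in> M" "M \<subseteq> V" "\<forall>w\<in>M. depth w \<le> depth u" "w \<in> M" "E u w"
  shows "u \<noteq> root \<and> w = par u"
  using edge_parent[OF assms(5)] parent[of w] assms by fastforce

definition removable_piece :: "'a set \<Rightarrow> 'a set \<Rightarrow> 'a set \<Rightarrow> bool" where
  "removable_piece M X K \<longleftrightarrow> K \<subseteq> X \<and> X \<subseteq> M \<and> X \<noteq> {} \<and> clique_collection V E K
     \<and> (\<forall>a\<in>K. \<forall>b\<in>M - X. \<not> E a b \<and> \<not> E b a)
     \<and> (\<forall>v\<in>M - X. v \<noteq> root \<longrightarrow> par v \<notin> X)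
     \<and> real (card X + card (roots M \<inter> X)) \<le> 4 * cc_weight E K"

lemma removable_piece_root_leaf:
  assumes "u \<in> M" "M \<subseteq> V" "\<forall>w\<in>M. depth w \<le> depth u" "u \<in> roots M"
  shows "removable_piece M {u} {u}"
proof -
  have no_nbr: "\<not> E u w \<and> \<not> E w u" if "w \<in> M" for w
    using deepest_neighbour_is_parent[OF assms(1-3) that] assms(4) that edge_sym
    unfolding roots_def by auto
  have no_child: "par v \<noteq> u" if "v \<in> M" "v \<noteq> root" for v
    using parent[of v] assms that by fastforce
  have "clique_collection V E {u}" "cc_weight E {u} = 1 / 2"
    using assms edge_irrefl by (auto intro: clique_collection_independent simp: cc_weight_independent)
  then show ?thesis
    using assms no_nbr no_child unfolding removable_piece_def by auto
qed

lemma removable_piece_family: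
  assumes "u \<in> M" "M \<subseteq> V" "\<forall>w\<in>M. depth w \<le> depth u" "u \<notin> roots M"
  shows "\<exists>X K. removable_piece M X K"
proof -
  define q where "q = par u"
  define C where "C = {c \<in> M. c \<noteq> root \<and> par c = q}"
  have u_root: "u \<noteq> root" and qM: "q \<in> M" using assms(1,4) unfolding roots_def q_def by auto
  have pu: "q \<in> V" "E u q" "depth u = Suc (depth q)"
    using parent[of u] assms(1,2) u_root unfolding q_def by auto
  have uC: "u \<in> C" and CM: "C \<subseteq> M" using assms(1) u_root unfolding C_def q_def by auto
  have finC: "finite C" using finite_subset[OF subset_trans[OF CM assms(2)] finite_V] .
  have depth_C: "depth c = depth u" if "c \<in> C" for c
    using that parent[of c] pu assms(2) unfolding C_def by auto
  have qC: "q \<notin> C" using depth_C[of q] pu(3) by auto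
  have C_nbr: "w = q" if "c \<in> C" "w \<in> M" "E c w \<or> E w c" for c w
  proof -
    have c: "c \<in> M" "\<forall>w\<in>M. depth w \<le> depth c" "par c = q"
      using that(1) CM assms(3) depth_C unfolding C_def by auto
    have "E c w" using that(3) by (metis edge_sym)
    then show "w = q" using deepest_neighbour_is_parent[OF c(1) assms(2) c(2) that(2)] c(3) by simp
  qed
  have C_indep: "\<forall>a\<in>C. \<forall>b\<in>C. \<not> E a b" using C_nbr CM qC by blast
  have parent_outside: "\<forall>v\<in>M - insert q C. v \<noteq> root \<longrightarrow> par v \<notin> insert q C"
  proof (intro ballI impI)
    fix v assume v: "v \<in> M - insert q C" "v \<noteq> root"
    have "par v \<noteq> q" using v unfolding C_def by auto
    moreover have "par v \<notin> C"
    proof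
      assume "par v \<in> C"
      then have "depth v = Suc (depth u)" using parent[of v] v assms(2) depth_C by auto
      then show False using assms(3) v by fastforce
    qed
    ultimately show "par v \<notin> insert q C" by blast
  qed
  have roots_X: "roots M \<inter> insert q C = (if q \<in> roots M then {q} else {})"
    using qM unfolding roots_def C_def by auto
  have card_X: "card (insert q C) = Suc (card C)" using finC qC by simp
  have card_C: "card C \<ge> 1" using uC finC by (auto simp: Suc_le_eq card_gt_0_iff)
  show ?thesis
  proof (cases "q \<notin> roots M \<or> card C \<ge> 2")
    case True
    have "clique_collection V E C"
      using clique_collection_independent[OF subset_trans[OF CM assms(2)] C_indep] .
    moreover have "real (card (insert q C) + card (roots M \<inter> insert q C)) \<le> 4 * cc_weight E C"
      using True card_X card_C roots_X cc_weight_independent[OF finC C_indep] by auto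
    moreover have "\<forall>a\<in>C. \<forall>b\<in>M - insert q C. \<not> E a b \<and> \<not> E b a" using C_nbr by blast
    ultimately have "removable_piece M (insert q C) C"
      unfolding removable_piece_def using CM qM parent_outside by (simp add: subset_insertI)
    then show ?thesis by blast
  next
    case False
    then have "card C = 1" and q_roots: "q \<in> roots M" using card_C by auto
    then have C: "C = {u}" using uC by (auto simp: card_1_singleton_iff)
    have edge_qu: "E q u" "E u q" "q \<noteq> u" using edge_sym[OF pu(2)] pu(2) qC uC by auto
    have q_nbr: "\<not> (E q w \<or> E w q)" if "w \<in> M - {q, u}" for w
    proof
      assume "E q w \<or> E w q"
      then have "E q w" by (metis edge_sym)
      then have "(q \<noteq> root \<and> par q = w) \<or> (w \<noteq> root \<and> par w = q)" by (rule edge_parent)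
      then show False using that q_roots C unfolding roots_def C_def by blast
    qed
    have "clique_collection V E {q, u}"
      using clique_collection_edge[OF edge_qu(1,2) pu(1)] assms(1,2) by blast
    moreover have "roots M \<inter> {q, u} = {q}" using roots_X q_roots C by simp
    then have "real (card {q, u} + card (roots M \<inter> {q, u})) \<le> 4 * cc_weight E {q, u}"
      using cc_weight_edge[OF edge_qu] edge_qu(3) by simp
    moreover have "\<forall>a\<in>{q, u}. \<forall>b\<in>M - {q, u}. \<not> E a b \<and> \<not> E b a"
      using q_nbr C_nbr[OF uC] by blast
    ultimately have "removable_piece M {q, u} {q, u}"
      unfolding removable_piece_def using qM assms(1) parent_outside C by simp
    then show ?thesis by blast
  qed
qed

lemma removable_piece_exists:
  assumes "M \<subseteq> V" "M \<noteq> {}"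
  obtains X K where "removable_piece M X K"
proof -
  have finM: "finite M" using finite_subset[OF assms(1) finite_V] .
  then have "Max (depth ` M) \<in> depth ` M" using assms(2) by simp
  then obtain u where u: "u \<in> M" "depth u = Max (depth ` M)" by auto
  then have deepest: "\<forall>w\<in>M. depth w \<le> depth u" using finM by simp
  show ?thesis
  proof (cases "u \<in> roots M")
    case True
    then show ?thesis using removable_piece_root_leaf[OF u(1) assms(1) deepest] that by blast
  next
    case False
    then show ?thesis using removable_piece_family[OF u(1) assms(1) deepest] that by blast
  qed
qed

lemma forest_weight_bound:
  "M \<subseteq> V \<Longrightarrow> \<exists>S\<subseteq>M. clique_collection V E S \<and> real (card M + card (roots M)) \<le> 4 * cc_weight E S"
proof (induction "card M" arbitrary: M rule: less_induct)
  case less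
  show ?case
  proof (cases "M = {}")
    case True
    then show ?thesis
      by (intro exI[of _ "{}"]) (simp add: clique_collection_empty cc_weight_empty roots_def)
  next
    case False
    then obtain X K where "removable_piece M X K" using removable_piece_exists less.prems by blast
    then have piece: "K \<subseteq> X" "X \<subseteq> M" "X \<noteq> {}" "clique_collection V E K"
      "\<forall>a\<in>K. \<forall>b\<in>M - X. \<not> E a b \<and> \<not> E b a" "\<forall>v\<in>M - X. v \<noteq> root \<longrightarrow> par v \<notin> X"
      "real (card X + card (roots M \<inter> X)) \<le> 4 * cc_weight E K"
      unfolding removable_piece_def by simp_all
    have finM: "finite M" using finite_subset[OF less.prems finite_V] .
    have finX: "finite X" using finite_subset[OF piece(2) finM] .
    have card_M: "card M = card (M - X) + card X"
      using card_Diff_subset[OF finX piece(2)] card_mono[OF finM piece(2)] by simp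
    moreover have "card X > 0" using finX piece(3) by auto
    ultimately obtain S where S: "S \<subseteq> M - X" "clique_collection V E S"
        "real (card (M - X) + card (roots (M - X))) \<le> 4 * cc_weight E S"
      using less.hyps[of "M - X"] less.prems by auto
    have sep: "\<forall>a\<in>S. \<forall>b\<in>K. \<not> E a b \<and> \<not> E b a" using piece(5) S(1) by blast
    have "cc_weight E (S \<union> K) = cc_weight E S + cc_weight E K"
      using S(1) piece(1) finM finX by (intro cc_weight_Un sep) (auto intro: finite_subset)
    moreover have "card (roots M) \<le> card (roots (M - X)) + card (roots M \<inter> X)"
      by (rule card_roots_le[OF finM piece(6)])
    ultimately have "real (card M + card (roots M)) \<le> 4 * cc_weight E (S \<union> K)"
      using card_M S(3) piece(7) by simp
    moreover have "clique_collection V E (S \<union> K)" by (rule clique_collection_Un[OF S(2) piece(4) sep])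
    moreover have "S \<union> K \<subseteq> M" using S(1) piece(1,2) by blast
    ultimately show ?thesis by blast
  qed
qed

lemma forest_weight_le_gamma_graph:
  assumes "M \<subseteq> V"
  shows "real (card M + card (roots M)) \<le> 4 * gamma_graph V E"
proof -
  obtain S where "clique_collection V E S" "real (card M + card (roots M)) \<le> 4 * cc_weight E S"
    using forest_weight_bound[OF assms] by blast
  then show ?thesis using cc_weight_le_gamma_graph[OF finite_V] by fastforce
qed

end

section \<open>Codes for pairs of commuting involutions\<close>

definition commuting_involutions :: "nat \<Rightarrow> (nat \<Rightarrow> nat) \<Rightarrow> (nat \<Rightarrow> nat) \<Rightarrow> bool" where
  "commuting_involutions n \<alpha> \<beta> \<longleftrightarrow> (\<forall>x. \<alpha> (\<alpha> x) = x) \<and> (\<forall>x. \<beta> (\<beta> x) = x)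
     \<and> (\<forall>x. \<alpha> (\<beta> x) = \<beta> (\<alpha> x)) \<and> (\<forall>x<n. \<alpha> x < n \<and> \<beta> x < n)"

definition pair_orbit :: "(nat \<Rightarrow> nat) \<Rightarrow> (nat \<Rightarrow> nat) \<Rightarrow> nat \<Rightarrow> nat set" where
  "pair_orbit \<alpha> \<beta> i = {i, \<alpha> i, \<beta> i, \<alpha> (\<beta> i)}"

text \<open>Given \<alpha>, the involution \<beta> is determined on each orbit of \<open>\<langle>\<alpha>, \<beta>\<rangle>\<close> by its value at the
  least point of the orbit; only when that value lies outside \<open>{i, \<alpha> i}\<close> is it a genuine
  choice among n letters.\<close>
definition orbit_code :: "nat \<Rightarrow> (nat \<Rightarrow> nat) \<Rightarrow> (nat \<Rightarrow> nat) \<Rightarrow> nat \<Rightarrow> nat" where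
  "orbit_code n \<alpha> \<beta> i =
     (if \<exists>k\<in>pair_orbit \<alpha> \<beta> i. k < i then n
      else if \<beta> i = i then n + 1 else if \<beta> i = \<alpha> i then n + 2 else \<beta> i)"

definition move_weight :: "(nat \<Rightarrow> nat) \<Rightarrow> (nat \<Rightarrow> nat) \<Rightarrow> nat \<Rightarrow> nat" where
  "move_weight \<alpha> \<beta> i = of_bool (\<beta> i \<noteq> i) + of_bool (\<beta> i \<noteq> i \<and> \<alpha> i = i)"

lemma pair_orbit_eq:
  "commuting_involutions n \<alpha> \<beta> \<Longrightarrow> x \<in> pair_orbit \<alpha> \<beta> p \<Longrightarrow> pair_orbit \<alpha> \<beta> x = pair_orbit \<alpha> \<beta> p"
  unfolding commuting_involutions_def pair_orbit_def by auto

lemma self_in_pair_orbit: "p \<in> pair_orbit \<alpha> \<beta> p"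
  unfolding pair_orbit_def by auto

lemma pair_orbit_subset:
  "commuting_involutions n \<alpha> \<beta> \<Longrightarrow> i < n \<Longrightarrow> pair_orbit \<alpha> \<beta> i \<subseteq> {..<n}"
  unfolding pair_orbit_def commuting_involutions_def by auto

lemma orbit_code_less_iff:
  "commuting_involutions n \<alpha> \<beta> \<Longrightarrow> i < n \<Longrightarrow>
     orbit_code n \<alpha> \<beta> i < n \<longleftrightarrow> (\<forall>k\<in>pair_orbit \<alpha> \<beta> i. i \<le> k) \<and> \<beta> i \<noteq> i \<and> \<beta> i \<noteq> \<alpha> i"
  unfolding orbit_code_def commuting_involutions_def by (auto simp: not_le)

lemma orbit_code_less:
  "commuting_involutions n \<alpha> \<beta> \<Longrightarrow> i < n \<Longrightarrow> orbit_code n \<alpha> \<beta> i < n + 3"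
  unfolding orbit_code_def commuting_involutions_def by auto

lemma sum_move_weight_pair_orbit:
  assumes ci: "commuting_involutions n \<alpha> \<beta>" and b1: "\<beta> p \<noteq> p" and b2: "\<beta> p \<noteq> \<alpha> p"
  shows "(\<Sum>x\<in>pair_orbit \<alpha> \<beta> p. move_weight \<alpha> \<beta> x) = 4"
proof -
  have aa: "\<And>x. \<alpha> (\<alpha> x) = x" and bb: "\<And>x. \<beta> (\<beta> x) = x" and ab: "\<And>x. \<alpha> (\<beta> x) = \<beta> (\<alpha> x)"
    using ci unfolding commuting_involutions_def by auto
  show ?thesis
  proof (cases "\<alpha> p = p")
    case True
    then have "pair_orbit \<alpha> \<beta> p = {p, \<beta> p}" unfolding pair_orbit_def using ab by auto
    moreover have "move_weight \<alpha> \<beta> p = 2" "move_weight \<alpha> \<beta> (\<beta> p) = 2"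
      using True b1 bb[of p] ab[of p] unfolding move_weight_def by auto
    ultimately show ?thesis using b1 by simp
  next
    case False
    have distinct: "\<alpha> (\<beta> p) \<noteq> p" "\<alpha> (\<beta> p) \<noteq> \<alpha> p" "\<alpha> (\<beta> p) \<noteq> \<beta> p"
      using b1 b2 False by (metis aa ab bb)+
    have "move_weight \<alpha> \<beta> x = 1" if "x \<in> pair_orbit \<alpha> \<beta> p" for x
    proof -
      have "\<beta> x \<noteq> x \<and> \<alpha> x \<noteq> x"
        using that b1 False distinct unfolding pair_orbit_def by (auto simp: aa ab bb)
      then show ?thesis unfolding move_weight_def by auto
    qed
    then have "(\<Sum>x\<in>pair_orbit \<alpha> \<beta> p. move_weight \<alpha> \<beta> x) = card (pair_orbit \<alpha> \<beta> p)" by simp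
    also have "\<dots> = 4" using False b1 b2 distinct unfolding pair_orbit_def by (simp add: eq_commute)
    finally show ?thesis .
  qed
qed

lemma card_orbit_code_less_le:
  assumes ci: "commuting_involutions n \<alpha> \<beta>"
  shows "4 * card {i\<in>{..<n}. orbit_code n \<alpha> \<beta> i < n} \<le> (\<Sum>i<n. move_weight \<alpha> \<beta> i)"
proof -
  define P where "P = {i\<in>{..<n}. orbit_code n \<alpha> \<beta> i < n}"
  have P: "(\<forall>k\<in>pair_orbit \<alpha> \<beta> p. p \<le> k) \<and> \<beta> p \<noteq> p \<and> \<beta> p \<noteq> \<alpha> p" "p < n" if "p \<in> P" for p
    using that orbit_code_less_iff[OF ci] unfolding P_def by auto
  have disjoint: "pair_orbit \<alpha> \<beta> p \<inter> pair_orbit \<alpha> \<beta> q = {}" if "p \<in> P" "q \<in> P" "p \<noteq> q" for p q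
  proof (rule ccontr)
    assume "pair_orbit \<alpha> \<beta> p \<inter> pair_orbit \<alpha> \<beta> q \<noteq> {}"
    then have "pair_orbit \<alpha> \<beta> p = pair_orbit \<alpha> \<beta> q" using pair_orbit_eq[OF ci] by blast
    then have "q \<in> pair_orbit \<alpha> \<beta> p" "p \<in> pair_orbit \<alpha> \<beta> q" using self_in_pair_orbit by metis+
    then show False using P[OF that(1)] P[OF that(2)] that(3) by fastforce
  qed
  have "4 * card P = (\<Sum>p\<in>P. \<Sum>x\<in>pair_orbit \<alpha> \<beta> p. move_weight \<alpha> \<beta> x)"
    using sum_move_weight_pair_orbit[OF ci] P by simp
  also have "\<dots> = (\<Sum>x\<in>(\<Union>p\<in>P. pair_orbit \<alpha> \<beta> p). move_weight \<alpha> \<beta> x)"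
    using disjoint by (intro sum.UNION_disjoint[symmetric]) (auto simp: P_def pair_orbit_def)
  also have "\<dots> \<le> (\<Sum>i<n. move_weight \<alpha> \<beta> i)"
    using pair_orbit_subset[OF ci] P by (intro sum_mono2) auto
  finally show ?thesis unfolding P_def .
qed

lemma orbit_code_inj:
  assumes ci1: "commuting_involutions n \<alpha> \<beta>1" and ci2: "commuting_involutions n \<alpha> \<beta>2"
    and eq: "\<And>i. i < n \<Longrightarrow> orbit_code n \<alpha> \<beta>1 i = orbit_code n \<alpha> \<beta>2 i"
  shows "i < n \<Longrightarrow> \<beta>1 i = \<beta>2 i"
proof (induction i rule: less_induct)
  case (less i)
  have aa: "\<And>x. \<alpha> (\<alpha> x) = x"
    and bb1: "\<And>x. \<beta>1 (\<beta>1 x) = x" and ab1: "\<And>x. \<alpha> (\<beta>1 x) = \<beta>1 (\<alpha> x)"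
    and bb2: "\<And>x. \<beta>2 (\<beta>2 x) = x" and ab2: "\<And>x. \<alpha> (\<beta>2 x) = \<beta>2 (\<alpha> x)"
    using ci1 ci2 unfolding commuting_involutions_def by auto
  have IH: "\<beta>1 k = \<beta>2 k" if "k < i" for k using less that by auto
  show ?case
  proof (cases "\<exists>k\<in>pair_orbit \<alpha> \<beta>1 i. k < i")
    case True
    then obtain k where k: "k \<in> pair_orbit \<alpha> \<beta>1 i" "k < i" by auto
    then consider "k = \<alpha> i" | "k = \<beta>1 i" | "k = \<alpha> (\<beta>1 i)" unfolding pair_orbit_def by auto
    then show ?thesis
    proof cases
      case 1
      then show ?thesis using IH[OF k(2)] by (metis aa ab1 ab2)
    next
      case 2
      then show ?thesis using IH[OF k(2)] by (metis bb1 bb2)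
    next
      case 3
      then show ?thesis using IH[OF k(2)] by (metis aa ab1 ab2 bb1 bb2)
    qed
  next
    case False
    have "\<beta>1 i < n" "\<beta>2 i < n" using ci1 ci2 less.prems unfolding commuting_involutions_def by auto
    then show ?thesis
      using False eq[OF less.prems] unfolding orbit_code_def by (auto split: if_splits)
  qed
qed

section \<open>Counting homomorphisms\<close>

lemma card_mult_le_weighted_codes:
  fixes w :: "'c \<Rightarrow> real"
  assumes finD: "finite D" and finC: "finite C" and inj: "inj_on f A" and code: "f ` A \<subseteq> D \<rightarrow>\<^sub>E C"
    and w_nonneg: "\<And>c. c \<in> C \<Longrightarrow> 0 \<le> w c" and lower: "\<And>a. a \<in> A \<Longrightarrow> t \<le> (\<Prod>x\<in>D. w (f a x))"
  shows "real (card A) * t \<le> (\<Sum>c\<in>C. w c) ^ card D"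
proof -
  have "real (card A) * t = (\<Sum>a\<in>A. t)" by simp
  also have "\<dots> \<le> (\<Sum>a\<in>A. \<Prod>x\<in>D. w (f a x))" using lower by (rule sum_mono)
  also have "\<dots> = (\<Sum>g\<in>f ` A. \<Prod>x\<in>D. w (g x))" by (simp add: sum.reindex[OF inj])
  also have "\<dots> \<le> (\<Sum>g\<in>D \<rightarrow>\<^sub>E C. \<Prod>x\<in>D. w (g x))"
    using code finD finC w_nonneg by (intro sum_mono2 finite_PiE prod_nonneg) (auto simp: PiE_iff)
  also have "\<dots> = (\<Prod>x\<in>D. \<Sum>c\<in>C. w c)" by (rule prod_sum_PiE[symmetric]) (use finD finC in auto)
  finally show ?thesis by simp
qed

definition racg_homs :: "'a set \<Rightarrow> ('a \<Rightarrow> 'a \<Rightarrow> bool) \<Rightarrow> nat \<Rightarrow> ('a \<Rightarrow> nat \<Rightarrow> nat) set" where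
  "racg_homs V E n = {\<sigma> \<in> V \<rightarrow>\<^sub>E {p. p permutes {..<n}}.
       (\<forall>v\<in>V. \<sigma> v \<circ> \<sigma> v = id) \<and> (\<forall>v\<in>V. \<forall>w\<in>V. E v w \<longrightarrow> \<sigma> v \<circ> \<sigma> w = \<sigma> w \<circ> \<sigma> v)}"

lemma hom_count_RACG_eq_card: "hom_count_RACG V E n = card (racg_homs V E n)"
  unfolding hom_count_RACG_def racg_homs_def ..

lemma racg_homs_permutes: "\<sigma> \<in> racg_homs V E n \<Longrightarrow> v \<in> V \<Longrightarrow> \<sigma> v permutes {..<n}"
  unfolding racg_homs_def by auto

context rooted_tree
begin

definition parent_perm :: "('a \<Rightarrow> nat \<Rightarrow> nat) \<Rightarrow> 'a \<Rightarrow> nat \<Rightarrow> nat" where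
  "parent_perm \<sigma> v = (if v = root then id else \<sigma> (par v))"

definition hom_code :: "nat \<Rightarrow> ('a \<Rightarrow> nat \<Rightarrow> nat) \<Rightarrow> 'a \<times> nat \<Rightarrow> nat" where
  "hom_code n \<sigma> = (\<lambda>(v, i) \<in> V \<times> {..<n}. orbit_code n (parent_perm \<sigma> v) (\<sigma> v) i)"

lemma racg_homs_commuting_involutions:
  assumes \<sigma>: "\<sigma> \<in> racg_homs V E n" and v: "v \<in> V"
  shows "commuting_involutions n (parent_perm \<sigma> v) (\<sigma> v)"
proof -
  have invol: "\<sigma> w (\<sigma> w x) = x" if "w \<in> V" for w x
    using \<sigma> that unfolding racg_homs_def by (metis (mono_tags, lifting) comp_apply id_apply mem_Collect_eq)
  have range: "\<sigma> w x < n" if "w \<in> V" "x < n" for w x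
    using permutes_in_image[OF racg_homs_permutes[OF \<sigma> that(1)]] that(2) by simp
  show ?thesis
  proof (cases "v = root")
    case True
    then show ?thesis unfolding commuting_involutions_def parent_perm_def using invol[OF v] range[OF v] by auto
  next
    case False
    note pv = parent[OF v False]
    have "\<sigma> v \<circ> \<sigma> (par v) = \<sigma> (par v) \<circ> \<sigma> v" using \<sigma> pv v unfolding racg_homs_def by auto
    then have "\<sigma> (par v) (\<sigma> v x) = \<sigma> v (\<sigma> (par v) x)" for x by (metis comp_apply)
    then show ?thesis unfolding commuting_involutions_def parent_perm_def
      using False invol range v pv by auto
  qed
qed

lemma hom_code_in_PiE:
  "\<sigma> \<in> racg_homs V E n \<Longrightarrow> hom_code n \<sigma> \<in> V \<times> {..<n} \<rightarrow>\<^sub>E {..<n + 3}"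
  unfolding hom_code_def using orbit_code_less racg_homs_commuting_involutions by auto

lemma inj_on_hom_code: "inj_on (hom_code n) (racg_homs V E n)"
proof (rule inj_onI)
  fix \<sigma> \<tau> assume \<sigma>: "\<sigma> \<in> racg_homs V E n" and \<tau>: "\<tau> \<in> racg_homs V E n"
    and eq: "hom_code n \<sigma> = hom_code n \<tau>"
  have "\<sigma> v = \<tau> v" if "v \<in> V" for v
    using that
  proof (induction "depth v" arbitrary: v rule: less_induct)
    case less
    have parent_eq: "parent_perm \<sigma> v = parent_perm \<tau> v"
      using less.hyps[of "par v"] parent[OF less.prems] unfolding parent_perm_def by auto
    have ci: "commuting_involutions n (parent_perm \<sigma> v) (\<sigma> v)"
        "commuting_involutions n (parent_perm \<sigma> v) (\<tau> v)"
      using racg_homs_commuting_involutions[OF \<sigma> less.prems]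
        racg_homs_commuting_involutions[OF \<tau> less.prems] parent_eq by simp_all
    have "orbit_code n (parent_perm \<sigma> v) (\<sigma> v) i = orbit_code n (parent_perm \<sigma> v) (\<tau> v) i"
      if "i < n" for i
      using fun_cong[OF eq, of "(v, i)"] that less.prems parent_eq unfolding hom_code_def by simp
    then have "\<sigma> v i = \<tau> v i" if "i < n" for i using orbit_code_inj[OF ci] that by blast
    moreover have "\<sigma> v i = \<tau> v i" if "\<not> i < n" for i
      using racg_homs_permutes[OF \<sigma> less.prems] racg_homs_permutes[OF \<tau> less.prems] that
      by (simp add: permutes_not_in)
    ultimately show ?case by blast
  qed
  moreover have "\<sigma> \<in> V \<rightarrow>\<^sub>E {p. p permutes {..<n}}" "\<tau> \<in> V \<rightarrow>\<^sub>E {p. p permutes {..<n}}"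
    using \<sigma> \<tau> unfolding racg_homs_def by auto
  ultimately show "\<sigma> = \<tau>" by (metis PiE_ext)
qed

lemma sum_move_weight_eq:
  fixes \<sigma> :: "'a \<Rightarrow> nat \<Rightarrow> nat" and i :: nat
  defines "M \<equiv> {v \<in> V. \<sigma> v i \<noteq> i}"
  shows "(\<Sum>v\<in>V. move_weight (parent_perm \<sigma> v) (\<sigma> v) i) = card M + card (roots M)"
proof -
  have "(\<Sum>v\<in>V. move_weight (parent_perm \<sigma> v) (\<sigma> v) i)
      = card (V \<inter> {v. \<sigma> v i \<noteq> i}) + card (V \<inter> {v. \<sigma> v i \<noteq> i \<and> parent_perm \<sigma> v i = i})"
    unfolding move_weight_def sum.distrib using finite_V by (simp only: sum_of_bool_eq of_nat_id)
  also have "V \<inter> {v. \<sigma> v i \<noteq> i} = M" unfolding M_def by blast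
  also have "V \<inter> {v. \<sigma> v i \<noteq> i \<and> parent_perm \<sigma> v i = i} = roots M"
    using parent unfolding M_def roots_def parent_perm_def by auto
  finally show ?thesis .
qed

lemma card_hom_code_less_le:
  assumes \<sigma>: "\<sigma> \<in> racg_homs V E n"
  shows "real (card {x \<in> V \<times> {..<n}. hom_code n \<sigma> x < n}) \<le> gamma_graph V E * n"
proof -
  define M where "M i = {v \<in> V. \<sigma> v i \<noteq> i}" for i
  have "{x \<in> V \<times> {..<n}. hom_code n \<sigma> x < n}
      = Sigma V (\<lambda>v. {i \<in> {..<n}. orbit_code n (parent_perm \<sigma> v) (\<sigma> v) i < n})"
    unfolding hom_code_def by auto
  then have "4 * card {x \<in> V \<times> {..<n}. hom_code n \<sigma> x < n}
      = (\<Sum>v\<in>V. 4 * card {i \<in> {..<n}. orbit_code n (parent_perm \<sigma> v) (\<sigma> v) i < n})"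
    using finite_V by (simp add: sum_distrib_left)
  also have "\<dots> \<le> (\<Sum>v\<in>V. \<Sum>i<n. move_weight (parent_perm \<sigma> v) (\<sigma> v) i)"
    by (intro sum_mono card_orbit_code_less_le racg_homs_commuting_involutions[OF \<sigma>])
  also have "\<dots> = (\<Sum>i<n. card (M i) + card (roots (M i)))"
    unfolding M_def by (subst sum.swap) (simp add: sum_move_weight_eq)
  finally have "real (4 * card {x \<in> V \<times> {..<n}. hom_code n \<sigma> x < n})
      \<le> (\<Sum>i<n. real (card (M i) + card (roots (M i))))"
    unfolding of_nat_sum[symmetric] of_nat_le_iff .
  also have "\<dots> \<le> (\<Sum>i<n. 4 * gamma_graph V E)"
    by (intro sum_mono forest_weight_le_gamma_graph) (auto simp: M_def)
  finally show ?thesis by (simp add: mult.commute)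
qed

lemma prod_hom_code_weight_ge:
  assumes "\<sigma> \<in> racg_homs V E n" "n \<ge> 1"
  shows "real n powr (- (gamma_graph V E * n))
           \<le> (\<Prod>x\<in>V \<times> {..<n}. if hom_code n \<sigma> x < n then 1 / real n else 1)"
proof -
  have "(\<Prod>x\<in>V \<times> {..<n}. if hom_code n \<sigma> x < n then 1 / real n else 1)
      = (1 / real n) ^ card {x \<in> V \<times> {..<n}. hom_code n \<sigma> x < n}"
    using finite_V by (simp add: prod.If_cases Int_def)
  also have "\<dots> = real n powr (- real (card {x \<in> V \<times> {..<n}. hom_code n \<sigma> x < n}))"
    using assms(2) by (simp add: powr_minus powr_realpow power_one_over inverse_eq_divide)
  finally show ?thesis using card_hom_code_less_le[OF assms(1)] assms(2) by (auto intro: powr_mono)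
qed

lemma card_racg_homs_mult_le:
  assumes "n \<ge> 1"
  shows "real (card (racg_homs V E n)) * real n powr (- (gamma_graph V E * n)) \<le> 4 ^ (card V * n)"
proof -
  define w where "w c = (if c < n then 1 / real n else 1)" for c
  have "real (card (racg_homs V E n)) * real n powr (- (gamma_graph V E * n))
      \<le> (\<Sum>c<n + 3. w c) ^ card (V \<times> {..<n})"
  proof (rule card_mult_le_weighted_codes)
    show "finite (V \<times> {..<n})" using finite_V by simp
    show "hom_code n ` racg_homs V E n \<subseteq> V \<times> {..<n} \<rightarrow>\<^sub>E {..<n + 3}"
      using hom_code_in_PiE by blast
    show "real n powr (- (gamma_graph V E * n)) \<le> (\<Prod>x\<in>V \<times> {..<n}. w (hom_code n \<sigma> x))"
      if "\<sigma> \<in> racg_homs V E n" for \<sigma>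
      using prod_hom_code_weight_ge[OF that assms] unfolding w_def .
    show "\<And>c. c \<in> {..<n + 3} \<Longrightarrow> 0 \<le> w c" unfolding w_def by simp
  qed (simp_all add: inj_on_hom_code)
  moreover have "(\<Sum>c<n + 3. w c) = 4" using assms by (simp add: w_def numeral_3_eq_3)
  ultimately show ?thesis by (simp add: card_cartesian_product)
qed

end

theorem mainTheorem8:
  fixes V :: "'a set" and E :: "'a \<Rightarrow> 'a \<Rightarrow> bool" and n :: nat
  assumes "is_tree V E" and "n \<ge> 1"
  shows "real (hom_count_RACG V E n)
           \<le> real n ^ (2 * card V) * 4 ^ (card V * n) * real n powr (gamma_graph V E * real n)"
proof -
  obtain r par depth where "rooted_tree V E r par depth" using is_tree_rooted_tree[OF assms(1)] .
  then interpret rooted_tree V E r par depth .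
  have "real (hom_count_RACG V E n) \<le> 4 ^ (card V * n) * real n powr (gamma_graph V E * n)"
    using card_racg_homs_mult_le[OF assms(2)] assms(2)
    by (simp add: hom_count_RACG_eq_card powr_minus field_simps)
  also have "\<dots> \<le> real n ^ (2 * card V) * 4 ^ (card V * n) * real n powr (gamma_graph V E * n)"
    using assms(2) by (simp add: mult_le_cancel_right1)
  finally show ?thesis .
qed

end
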